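(* Let $d\ge 1$, let $\mathcal A=\{A_n:n\ge2\}$ be the family defined below, and let $\mathcal B$ be any family of bounded convex sets in $\mathbb R^{d+1}$ each of which contains the cube $C=\{x\in\mathbb R^{d+1}: x_1=0,\ 0\le x_i\le 1 \text{ for } i=2,\dots,d+1\}$. Then $\mathcal F=\mathcal A\cup\mathcal B$ satisfies the $(d+1+2k,\,d+1+k)$-property for every integer $k\ge0$.
   Context: Let $e_1,\dots,e_{d+1}$ be the standard basis of $\mathbb R^{d+1}$. For $0\le\alpha\le1$, let $S_\alpha\subset\operatorname{span}(e_2,\dots,e_{d+1})$ be the $(d-1)$-dimensional simplex with vertices $e_2+\dots+e_k+\alpha e_{k+1}$ for $k=1,\dots,d$. For each integer $n\ge2$ let $I_n=\{te_1:t\ge n\}$ and $A_n=\operatorname{conv}(S_{1/n}\cup I_n)$. A family of at least $p$ sets satisfies the $(p,q)$-property if among any $p$ of its members there are $q$ with a common point. *)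

theory Defs
  imports "HOL-Analysis.Analysis"
begin

text \<open>Coordinates of R^(d+1) are modelled by the index type 'n together with a
  labelling b, a bijection from {1..d+1} onto the index type; e b k is the
  k-th standard basis vector.\<close>

definition ebas :: "(nat \<Rightarrow> 'n::finite) \<Rightarrow> nat \<Rightarrow> real ^ 'n" where
  "ebas b k = axis (b k) 1"

definition Ssimp :: "(nat \<Rightarrow> 'n::finite) \<Rightarrow> nat \<Rightarrow> real \<Rightarrow> (real ^ 'n) set" where
  "Ssimp b d \<alpha> = convex hull
     {(\<Sum>i\<in>{2..k}. ebas b i) + \<alpha> *\<^sub>R ebas b (k + 1) | k. 1 \<le> k \<and> k \<le> d}"

definition Iray :: "(nat \<Rightarrow> 'n::finite) \<Rightarrow> nat \<Rightarrow> (real ^ 'n) set" where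
  "Iray b n = {t *\<^sub>R ebas b 1 | t. t \<ge> real n}"

definition Aset :: "(nat \<Rightarrow> 'n::finite) \<Rightarrow> nat \<Rightarrow> nat \<Rightarrow> (real ^ 'n) set" where
  "Aset b d n = convex hull (Ssimp b d (1 / real n) \<union> Iray b n)"

definition Afam :: "(nat \<Rightarrow> 'n::finite) \<Rightarrow> nat \<Rightarrow> (real ^ 'n) set set" where
  "Afam b d = {Aset b d n | n. n \<ge> 2}"

definition cube :: "(nat \<Rightarrow> 'n::finite) \<Rightarrow> nat \<Rightarrow> (real ^ 'n) set" where
  "cube b d = {x. x $ b 1 = 0 \<and> (\<forall>i\<in>{2..d+1}. 0 \<le> x $ b i \<and> x $ b i \<le> 1)}"

definition pq_property :: "nat \<Rightarrow> nat \<Rightarrow> 'a set set \<Rightarrow> bool" where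
  "pq_property p q F \<longleftrightarrow>
     (\<exists>G\<subseteq>F. finite G \<and> card G = p) \<and>
     (\<forall>G\<subseteq>F. finite G \<and> card G = p \<longrightarrow>
        (\<exists>H\<subseteq>G. card H = q \<and> \<Inter>H \<noteq> {}))"

end

theory Submission imports Defs begin

(*
  Write A_n for the members of the family Afam.  Three facts about them suffice.
  (1) Finitely many of the A_n always meet: they all contain the far end of the
      ray {t e_1 : t >= n}.
  (2) At most d of them, A_{n_1}, ..., A_{n_j}, meet in a point of the cube C.
      Let p_1, ..., p_d be the numbers 1/n_i, padded with further probabilities.
      The point whose (m+1)-st coordinate is the probability that at least m of
      d independent events with probabilities p_1, ..., p_d occur (m = 1..d)
      lies in C, and conditioning on the i-th event writes it as a convex
      combination of the vertices of the simplex S_{p_i}.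
  (3) The A_n are pairwise distinct (A_m misses n e_1 when n < m), so the
      family is infinite.
  A purely combinatorial lemma, proved first, turns (1), (2) and the
  hypothesis that every member of B contains C into the (d+1+2k, d+1+k)-property:
  among d+1+2k sets either d+1+k belong to Afam, or at least k+1 belong to B,
  and then these together with at most d members of Afam share a point of C.
*)

section \<open>A combinatorial criterion for the (p,q)-property\<close>

lemma pq_property_union:
  fixes A B :: "'a set set" and d k :: nat
  assumes "infinite A"
    and A_meet: "\<And>H. H \<subseteq> A \<Longrightarrow> finite H \<Longrightarrow> \<Inter>H \<noteq> {}"
    and A_B_meet: "\<And>H. H \<subseteq> A \<Longrightarrow> finite H \<Longrightarrow> card H \<le> d \<Longrightarrow> \<exists>x\<in>\<Inter>H. \<forall>X\<in>B. x \<in> X"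
  shows "pq_property (d + 1 + 2 * k) (d + 1 + k) (A \<union> B)"
proof -
  let ?p = "d + 1 + 2 * k" and ?q = "d + 1 + k"
  have "\<exists>H\<subseteq>G. card H = ?q \<and> \<Inter>H \<noteq> {}"
    if G: "G \<subseteq> A \<union> B" "finite G" "card G = ?p" for G
  proof -
    define GA where "GA = G \<inter> A"
    define GB where "GB = G - A"
    have fin: "finite GA" "finite GB" using G(2) unfolding GA_def GB_def by auto
    have GB_B: "GB \<subseteq> B" using G(1) unfolding GB_def by auto
    have "G = GA \<union> GB" "GA \<inter> GB = {}" unfolding GA_def GB_def by auto
    then have card_split: "card GA + card GB = ?p"
      using card_Un_disjoint[OF fin] G(3) by simp
    show ?thesis
    proof (cases "?q \<le> card GA")
      case True
      then obtain H where "H \<subseteq> GA" "card H = ?q" "finite H" by (rule obtain_subset_with_card_n)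
      then show ?thesis using A_meet unfolding GA_def by blast
    next
      case False
      text \<open>Take as many members of B as possible (at least k+1 of them) and fill
        up with at most d members of A.\<close>
      define nB where "nB = min (card GB) ?q"
      have nB: "nB \<le> card GB" "?q - nB \<le> card GA" "?q - nB \<le> d"
        using False card_split unfolding nB_def by (auto simp: min_def)
      obtain HB where HB: "HB \<subseteq> GB" "card HB = nB" "finite HB"
        using obtain_subset_with_card_n[OF nB(1)] by blast
      obtain HA where HA: "HA \<subseteq> GA" "card HA = ?q - nB" "finite HA"
        using obtain_subset_with_card_n[OF nB(2)] by blast
      obtain x where x: "x \<in> \<Inter>HA" "\<forall>X\<in>B. x \<in> X"
        using A_B_meet[of HA] HA nB(3) unfolding GA_def by auto
      have "HA \<inter> HB = {}" using HA(1) HB(1) unfolding GA_def GB_def by auto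
      then have "card (HA \<union> HB) = ?q"
        using card_Un_disjoint[OF HA(3) HB(3)] HA(2) HB(2) unfolding nB_def by simp
      moreover have "HA \<union> HB \<subseteq> G" using HA(1) HB(1) unfolding GA_def GB_def by auto
      moreover have "x \<in> \<Inter>(HA \<union> HB)" using x HB(1) GB_B by auto
      ultimately show ?thesis by blast
    qed
  qed
  moreover have "\<exists>G\<subseteq>A \<union> B. finite G \<and> card G = ?p"
    using infinite_arbitrarily_large[OF \<open>infinite A\<close>, of ?p] by blast
  ultimately show ?thesis unfolding pq_property_def by blast
qed

section \<open>The probability of at least j successes\<close>

text \<open>at_least ps j is the probability that at least j of independent events
  with probabilities ps occur; the recursion conditions on the first event.\<close>

fun at_least :: "real list \<Rightarrow> nat \<Rightarrow> real" where
  "at_least [] j = (if j = 0 then 1 else 0)"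
| "at_least (p # ps) 0 = 1"
| "at_least (p # ps) (Suc j) = p * at_least ps j + (1 - p) * at_least ps (Suc j)"

lemma at_least_0 [simp]: "at_least ps 0 = 1"
  by (cases ps) auto

lemma at_least_beyond_length: "length ps < j \<Longrightarrow> at_least ps j = 0"
proof (induction ps arbitrary: j)
  case (Cons p ps)
  then obtain i where "j = Suc i" by (cases j) auto
  with Cons show ?case by simp
qed simp

lemma at_least_bounds: "set ps \<subseteq> {0..1} \<Longrightarrow> at_least ps j \<in> {0..1}"
proof (induction ps arbitrary: j)
  case (Cons p ps)
  show ?case
  proof (cases j)
    case (Suc i)
    have p: "0 \<le> p" "p \<le> 1" using Cons.prems by auto
    have IH: "at_least ps i \<in> {0..1}" "at_least ps (Suc i) \<in> {0..1}" using Cons by auto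
    have "p * at_least ps i + (1 - p) * at_least ps (Suc i) \<le> p * 1 + (1 - p) * 1"
      by (intro add_mono mult_left_mono) (use p IH in auto)
    with p IH show ?thesis using Suc by simp
  qed simp
qed simp

lemma at_least_antimono: "set ps \<subseteq> {0..1} \<Longrightarrow> at_least ps (Suc j) \<le> at_least ps j"
proof (induction ps arbitrary: j)
  case (Cons p ps)
  show ?case
  proof (cases j)
    case 0
    then show ?thesis using at_least_bounds[OF Cons.prems, of 1] by (simp del: at_least.simps)
  next
    case (Suc i)
    have p: "0 \<le> p" "p \<le> 1" using Cons.prems by auto
    have "p * at_least ps (Suc i) + (1 - p) * at_least ps (Suc (Suc i))
        \<le> p * at_least ps i + (1 - p) * at_least ps (Suc i)"
      by (intro add_mono mult_left_mono) (use p Cons in auto)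
    then show ?thesis using Suc by simp
  qed
qed simp

lemma at_least_remove:
  assumes "p \<in> set ps"
  shows "at_least ps (Suc j) = p * at_least (remove1 p ps) j + (1 - p) * at_least (remove1 p ps) (Suc j)"
  using assms
proof (induction ps arbitrary: j)
  case (Cons a ps)
  show ?case
  proof (cases "p = a")
    case False
    then have p: "p \<in> set ps" using Cons.prems by simp
    let ?r = "remove1 p ps"
    have r: "remove1 p (a # ps) = a # ?r" using False by simp
    show ?thesis
    proof (cases j)
      case 0
      have IH: "at_least ps (Suc 0) = p + (1 - p) * at_least ?r (Suc 0)"
        using Cons.IH[OF p, of 0] by simp
      show ?thesis unfolding r 0
        by (simp only: at_least.simps at_least_0 IH) (simp add: algebra_simps)
    next
      case (Suc i)
      show ?thesis unfolding r Suc
        by (simp only: at_least.simps Cons.IH[OF p]) (simp add: algebra_simps)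
    qed
  qed simp
qed simp

text \<open>Conditioning on the event with probability p expresses at_least ps j as a
  combination with weights w k = at_least r (k-1) - at_least r k of the numbers
  [j < k] + p [j = k]; these are the (j+1)-st coordinates of the vertices of S_p.\<close>

lemma at_least_conditioned_sum:
  assumes "p \<in> set ps" "length ps = d" "1 \<le> j" "j \<le> d"
    and r: "r = remove1 p ps"
  shows "(\<Sum>k\<in>{1..d}. (at_least r (k - 1) - at_least r k) *
            ((if j + 1 \<le> k then 1 else 0) + p * (if k = j then 1 else 0))) = at_least ps j"
proof -
  define g where "g k = at_least r k" for k
  have gd: "g d = 0"
    unfolding g_def r using assms(1-4) by (intro at_least_beyond_length) (simp add: length_remove1)
  define c where "c k = (if j + 1 \<le> k then 1 else 0) + p * (if k = j then 1 else 0)" for k :: nat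
  have "(\<Sum>k\<in>{1..j}. (g (k - 1) - g k) * c k) = (\<Sum>k\<in>{1..j}. if k = j then p * (g (k - 1) - g k) else 0)"
    unfolding c_def by (rule sum.cong) auto
  also have "\<dots> = p * (g (j - 1) - g j)"
    using assms(3) by (simp only: sum.delta finite_atLeastAtMost) simp
  finally have low: "(\<Sum>k\<in>{1..j}. (g (k - 1) - g k) * c k) = p * (g (j - 1) - g j)" .
  have "(\<Sum>k\<in>{Suc j..d}. (g (k - 1) - g k) * c k) = (\<Sum>k\<in>{Suc j..d}. (- g k) - (- g (k - 1)))"
    unfolding c_def by (rule sum.cong) auto
  also have "\<dots> = g j - g d"
    using sum_telescope''[OF assms(4), of "\<lambda>k. - g k"] by simp
  finally have high: "(\<Sum>k\<in>{Suc j..d}. (g (k - 1) - g k) * c k) = g j - g d" .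
  have "{1..d} = {1..j} \<union> {Suc j..d}" using assms(3,4) by auto
  then have "(\<Sum>k\<in>{1..d}. (g (k - 1) - g k) * c k)
      = (\<Sum>k\<in>{1..j}. (g (k - 1) - g k) * c k) + (\<Sum>k\<in>{Suc j..d}. (g (k - 1) - g k) * c k)"
    by (simp add: sum.union_disjoint)
  also have "\<dots> = p * (g (j - 1) - g j) + (g j - g d)"
    unfolding low high ..
  also have "\<dots> = at_least ps j"
    using at_least_remove[OF assms(1), of "j - 1"] assms(3) gd unfolding g_def r
    by (cases j) (auto simp: algebra_simps)
  finally show ?thesis unfolding g_def c_def .
qed

lemma ebas_nth:
  assumes "bij_betw b {1..d+1} (UNIV :: 'n::finite set)" "i \<in> {1..d+1}" "j \<in> {1..d+1}"
  shows "(ebas b i :: real ^ 'n) $ b j = (if i = j then 1 else 0)"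
proof -
  have "b i = b j \<longleftrightarrow> i = j"
    using assms by (meson bij_betw_def inj_on_eq_iff)
  then show ?thesis unfolding ebas_def axis_def by auto
qed

lemma vec_eq_by_labels:
  assumes "bij_betw b {1..d+1} (UNIV :: 'n::finite set)"
    and "\<And>m. m \<in> {1..d+1} \<Longrightarrow> (x :: real ^ 'n) $ b m = y $ b m"
  shows "x = y"
  using assms by (metis bij_betw_imp_surj_on imageE iso_tuple_UNIV_I vec_eq_iff)

definition svertex :: "(nat \<Rightarrow> 'n::finite) \<Rightarrow> real \<Rightarrow> nat \<Rightarrow> real ^ 'n" where
  "svertex b \<alpha> k = (\<Sum>i\<in>{2..k}. ebas b i) + \<alpha> *\<^sub>R ebas b (k + 1)"

lemma Ssimp_eq: "Ssimp b d \<alpha> = convex hull (svertex b \<alpha> ` {1..d})"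
  unfolding Ssimp_def svertex_def by (rule arg_cong[where f = "\<lambda>S. convex hull S"]) auto

lemma svertex_nth:
  assumes bb: "bij_betw b {1..d+1} (UNIV :: 'n::finite set)" and "k \<in> {1..d}" "m \<in> {1..d+1}"
  shows "(svertex b \<alpha> k :: real ^ 'n) $ b m
     = (if 2 \<le> m \<and> m \<le> k then 1 else 0) + \<alpha> * (if m = k + 1 then 1 else 0)"
proof -
  have "(\<Sum>i\<in>{2..k}. (ebas b i :: real ^ 'n) $ b m) = (\<Sum>i\<in>{2..k}. if i = m then 1 else 0)"
    by (rule sum.cong) (use assms in \<open>auto simp: ebas_nth[OF bb]\<close>)
  then show ?thesis using assms by (simp add: svertex_def ebas_nth[OF bb])
qed

section \<open>A common point of d simplices inside the cube\<close>

definition success_point :: "(nat \<Rightarrow> 'n::finite) \<Rightarrow> nat \<Rightarrow> real list \<Rightarrow> real ^ 'n" where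
  "success_point b d ps = (\<Sum>m\<in>{2..d+1}. at_least ps (m - 1) *\<^sub>R ebas b m)"

lemma success_point_nth:
  assumes bb: "bij_betw b {1..d+1} (UNIV :: 'n::finite set)" and "m \<in> {1..d+1}"
  shows "(success_point b d ps :: real ^ 'n) $ b m = (if 2 \<le> m then at_least ps (m - 1) else 0)"
proof -
  have "(success_point b d ps :: real ^ 'n) $ b m = (\<Sum>i\<in>{2..d+1}. if i = m then at_least ps (i - 1) else 0)"
    unfolding success_point_def sum_component
    by (rule sum.cong) (use assms in \<open>auto simp: ebas_nth[OF bb]\<close>)
  then show ?thesis using assms by simp
qed

lemma success_point_in_cube:
  assumes "bij_betw b {1..d+1} (UNIV :: 'n::finite set)" "set ps \<subseteq> {0..1}"
  shows "(success_point b d ps :: real ^ 'n) \<in> cube b d"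
  unfolding cube_def using success_point_nth[OF assms(1)] at_least_bounds[OF assms(2)] by auto

text \<open>For each probability p among d probabilities ps, the point lies in S_p:
  it is the convex combination of the vertices of S_p with the weights of
  at_least_conditioned_sum.\<close>

lemma success_point_in_simplex:
  assumes bb: "bij_betw b {1..d+1} (UNIV :: 'n::finite set)" and "d \<ge> 1"
    and ps: "set ps \<subseteq> {0..1}" "length ps = d" and p: "p \<in> set ps"
  shows "(success_point b d ps :: real ^ 'n) \<in> Ssimp b d p"
proof -
  define r where "r = remove1 p ps"
  define w where "w k = at_least r (k - 1) - at_least r k" for k
  have r: "set r \<subseteq> {0..1}" "length r = d - 1"
    using ps p set_remove1_subset unfolding r_def by (fastforce simp: length_remove1)+
  have "sum w {1..d} = (\<Sum>k\<in>{Suc 0..d}. (- at_least r k) - (- at_least r (k - 1)))"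
    unfolding w_def by (rule sum.cong) auto
  also have "\<dots> = at_least r 0 - at_least r d"
    using sum_telescope''[of 0 d "\<lambda>k. - at_least r k"] by simp
  finally have w_sum: "sum w {1..d} = 1"
    using at_least_beyond_length[of r d] r(2) \<open>d \<ge> 1\<close> by simp
  have w_nonneg: "0 \<le> w k" if "k \<in> {1..d}" for k
    using that at_least_antimono[OF r(1), of "k - 1"] unfolding w_def by (cases k) auto
  have combination: "(\<Sum>k\<in>{1..d}. w k *\<^sub>R svertex b p k) = (success_point b d ps :: real ^ 'n)"
  proof (rule vec_eq_by_labels[OF bb])
    fix m assume m: "m \<in> {1..d+1}"
    have "(\<Sum>k\<in>{1..d}. w k *\<^sub>R (svertex b p k :: real ^ 'n)) $ b m
        = (\<Sum>k\<in>{1..d}. w k * ((if 2 \<le> m \<and> m \<le> k then 1 else 0) + p * (if m = k + 1 then 1 else 0)))"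
      unfolding sum_component by (rule sum.cong) (simp_all add: svertex_nth[OF bb _ m])
    also have "\<dots> = success_point b d ps $ b m"
    proof (cases "m = 1")
      case False
      then obtain j where j: "m = j + 1" "1 \<le> j" "j \<le> d" using m by (cases m) auto
      have "(\<Sum>k\<in>{1..d}. w k * ((if 2 \<le> m \<and> m \<le> k then 1 else 0) + p * (if m = k + 1 then 1 else 0)))
          = (\<Sum>k\<in>{1..d}. w k * ((if j + 1 \<le> k then 1 else 0) + p * (if k = j then 1 else 0)))"
        by (rule sum.cong) (use j in auto)
      also have "\<dots> = at_least ps j"
        unfolding w_def using at_least_conditioned_sum[OF p ps(2) j(2,3) r_def] .
      finally show ?thesis using success_point_nth[OF bb m] j by simp
    qed (use success_point_nth[OF bb m] in simp)
    finally show "(\<Sum>k\<in>{1..d}. w k *\<^sub>R svertex b p k) $ b m = success_point b d ps $ b m" .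
  qed
  have "(\<Sum>k\<in>{1..d}. w k *\<^sub>R svertex b p k) \<in> convex hull (svertex b p ` {1..d})"
    by (rule convex_sum) (use w_sum w_nonneg in \<open>auto intro: hull_inc\<close>)
  then show ?thesis unfolding Ssimp_eq combination .
qed

section \<open>The sets A_n\<close>

lemma Aset_ray: "real n \<le> t \<Longrightarrow> t *\<^sub>R ebas b 1 \<in> Aset b d n"
  unfolding Aset_def Iray_def by (rule hull_inc) auto

lemma Ssimp_subset_Aset: "Ssimp b d (1 / real n) \<subseteq> Aset b d n"
  unfolding Aset_def by (meson hull_subset le_sup_iff subset_trans)

text \<open>A_m lies in the half-space m \<le> x_1 + m^2 x_2, which does not contain n e_1
  for n < m.\<close>

lemma Aset_halfspace:
  assumes bb: "bij_betw b {1..d+1} (UNIV :: 'n::finite set)" and "d \<ge> 1" "m \<ge> 1"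
  shows "Aset b d m \<subseteq> {x :: real ^ 'n. real m \<le> x $ b 1 + (real m)^2 * x $ b 2}"
    (is "_ \<subseteq> ?T")
proof -
  have T: "?T = {x. inner (ebas b 1 + (real m)^2 *\<^sub>R ebas b 2) x \<ge> real m}"
    by (simp add: ebas_def inner_add_left inner_axis' mult.commute)
  have in12: "1 \<in> {1..d+1}" "2 \<in> {1..d+1}" using assms(2) by auto
  have "svertex b (1 / real m) k \<in> ?T" if k: "k \<in> {1..d}" for k
  proof -
    have "1 / real m \<le> svertex b (1 / real m) k $ b 2"
      using svertex_nth[OF bb k in12(2)] k assms(3) by auto
    then have "(real m)^2 * (1 / real m) \<le> (real m)^2 * svertex b (1 / real m) k $ b 2"
      by (rule mult_left_mono) simp
    then show ?thesis using svertex_nth[OF bb k in12(1)] k assms(3) by (simp add: power2_eq_square)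
  qed
  then have "Ssimp b d (1 / real m) \<subseteq> ?T"
    unfolding Ssimp_eq T by (intro hull_minimal convex_halfspace_ge) (auto simp: T[symmetric])
  moreover have "Iray b m \<subseteq> ?T"
    unfolding Iray_def using ebas_nth[OF bb in12(1) in12(1)] ebas_nth[OF bb in12(1) in12(2)] by auto
  ultimately show ?thesis
    unfolding Aset_def T by (intro hull_minimal convex_halfspace_ge) (auto simp: T[symmetric])
qed

lemma Aset_inj:
  assumes bb: "bij_betw b {1..d+1} (UNIV :: 'n::finite set)" and "d \<ge> 1"
  shows "inj_on (Aset b d :: nat \<Rightarrow> (real ^ 'n) set) {n. 2 \<le> n}"
proof -
  have in12: "1 \<in> {1..d+1}" "2 \<in> {1..d+1}" using assms(2) by auto
  have not_in: "(real n *\<^sub>R ebas b 1 :: real ^ 'n) \<notin> Aset b d m" if "n < m" for n m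
    using Aset_halfspace[OF bb assms(2), of m] that
      ebas_nth[OF bb in12(1) in12(1)] ebas_nth[OF bb in12(1) in12(2)] by auto
  show ?thesis
    by (rule inj_onI) (metis Aset_ray linorder_neqE_nat not_in order_refl)
qed

lemma Afam_infinite:
  assumes "bij_betw b {1..d+1} (UNIV :: 'n::finite set)" and "d \<ge> 1"
  shows "infinite (Afam b d :: (real ^ 'n) set set)"
proof -
  have "infinite {n :: nat. 2 \<le> n}" by (simp add: infinite_Ici atLeast_def[symmetric])
  then show ?thesis
    using Aset_inj[OF assms] finite_imageD unfolding Afam_def setcompr_eq_image by auto
qed

lemma Afam_finite_meet:
  assumes "H \<subseteq> Afam b d" "finite H"
  shows "\<Inter>H \<noteq> {}"
proof -
  obtain N where N: "finite N" "H = Aset b d ` N"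
    using finite_subset_image[OF assms(2), of "Aset b d" "{n. 2 \<le> n}"] assms(1)
    unfolding Afam_def by (auto simp: setcompr_eq_image)
  have "real (Max N) *\<^sub>R ebas b 1 \<in> Aset b d n" if "n \<in> N" for n
    by (rule Aset_ray) (use Max_ge[OF N(1) that] in simp)
  then show ?thesis using N(2) by blast
qed

lemma Afam_few_meet_in_cube:
  assumes bb: "bij_betw b {1..d+1} (UNIV :: 'n::finite set)" and "d \<ge> 1"
    and H: "H \<subseteq> Afam b d" "finite H" "card H \<le> d"
  shows "\<exists>x\<in>\<Inter>H. (x :: real ^ 'n) \<in> cube b d"
proof -
  obtain N where N: "N \<subseteq> {n. 2 \<le> n}" "inj_on (Aset b d) N" "H = Aset b d ` N"
    using H(1) subset_image_inj[of H "Aset b d" "{n. 2 \<le> n}"] unfolding Afam_def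
    by (auto simp: setcompr_eq_image)
  have fin: "finite N" using N(2,3) H(2) finite_image_iff by blast
  have "card N \<le> d" using H(3) N card_image by fastforce
  define ps where "ps = map (\<lambda>n. 1 / real n) (sorted_list_of_set N) @ replicate (d - card N) 0"
  have ps: "set ps \<subseteq> {0..1}" "length ps = d"
    using N(1) fin \<open>card N \<le> d\<close> unfolding ps_def by auto
  have "success_point b d ps \<in> Aset b d n" if "n \<in> N" for n
    using success_point_in_simplex[OF bb \<open>d \<ge> 1\<close> ps, of "1 / real n"] Ssimp_subset_Aset that fin
    unfolding ps_def by auto
  then show ?thesis using N(3) success_point_in_cube[OF bb ps(1)] by blast
qed

theorem lemma2p4:
  fixes b :: "nat \<Rightarrow> 'n::finite" and d k :: nat and B :: "(real ^ 'n) set set"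
  assumes "CARD('n) = d + 1" and "d \<ge> 1"
    and "bij_betw b {1..d+1} (UNIV :: 'n set)"
    and "\<forall>X\<in>B. bounded X \<and> convex X \<and> cube b d \<subseteq> X"
  shows "pq_property (d + 1 + 2 * k) (d + 1 + k) (Afam b d \<union> B)"
proof (rule pq_property_union)
  show "infinite (Afam b d)" using Afam_infinite[OF assms(3,2)] .
  show "\<Inter>H \<noteq> {}" if "H \<subseteq> Afam b d" "finite H" for H
    using Afam_finite_meet that .
  show "\<exists>x\<in>\<Inter>H. \<forall>X\<in>B. x \<in> X" if "H \<subseteq> Afam b d" "finite H" "card H \<le> d" for H
    using Afam_few_meet_in_cube[OF assms(3,2) that] assms(4) by blast
qed

end
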